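(* Let $X$ and $Y$ be closed subsets of $\mathbb{R}^n$. If $X$, $Y$ and $X\cup Y$ are $\ell_1$-convex, then so is $X\cap Y$.
   Context: A subset $Z\subseteq\mathbb{R}^n$ is $\ell_1$-convex if for all $z,z'\in Z$, with $D=\sum_i|z_i-z'_i|$, there is $\gamma\colon[0,D]\to Z$ with $\gamma(0)=z,\gamma(D)=z'$ and $\sum_i|\gamma_i(t)-\gamma_i(t')|=|t-t'|$ for all $t,t'$. *)

theory Defs
  imports "HOL-Analysis.Analysis"
begin

definition l1_dist :: "real ^ 'n \<Rightarrow> real ^ 'n \<Rightarrow> real" where
  "l1_dist z z' = (\<Sum>i\<in>UNIV. \<bar>z $ i - z' $ i\<bar>)"

definition l1_convex :: "(real ^ 'n) set \<Rightarrow> bool" where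
  "l1_convex Z \<longleftrightarrow> (\<forall>z\<in>Z. \<forall>z'\<in>Z.
     \<exists>\<gamma> :: real \<Rightarrow> real ^ 'n.
        \<gamma> 0 = z \<and> \<gamma> (l1_dist z z') = z' \<and>
        (\<forall>t\<in>{0..l1_dist z z'}. \<gamma> t \<in> Z) \<and>
        (\<forall>t\<in>{0..l1_dist z z'}. \<forall>t'\<in>{0..l1_dist z z'}.
            l1_dist (\<gamma> t) (\<gamma> t') = \<bar>t - t'\<bar>))"

end

theory Submission
  imports Defs
begin

text \<open>
  By a Menger-type argument, a closed set Z is l1-convex as soon as any two distinct points
  a, b of Z have a third point of Z between them (l1_dist a x + l1_dist x b = l1_dist a b):
  a maximal chain of such betweenness-ordered points from a to b is closed, hence compact, and
  cannot skip a distance from a, so it is the image of a geodesic.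

  For a, b in the intersection, pick p on an X-geodesic at distance \<epsilon>/2 from a and q on a
  Y-geodesic at distance \<epsilon>/2 from b. A geodesic from p to q inside X \<union> Y is connected, so it
  meets the closed set X \<inter> Y in a point u; u lies between p and q and hence between a and b.
  Choosing \<epsilon> below every nonzero coordinate gap of a and b rules out u = a and u = b.
\<close>

lemma l1_dist_nonneg: "0 \<le> l1_dist x y"
  unfolding l1_dist_def by (simp add: sum_nonneg)

lemma l1_dist_commute: "l1_dist x y = l1_dist y x"
  unfolding l1_dist_def by (simp add: abs_minus_commute)

lemma l1_dist_triangle: "l1_dist x z \<le> l1_dist x y + l1_dist y z"
  unfolding l1_dist_def sum.distrib[symmetric] by (rule sum_mono) linarith

lemma l1_dist_self [simp]: "l1_dist x x = 0"
  unfolding l1_dist_def by simp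

lemma component_le_l1_dist: "\<bar>x $ i - y $ i\<bar> \<le> l1_dist x y"
  unfolding l1_dist_def by (rule member_le_sum) auto

lemma l1_dist_eq_0_iff: "l1_dist x y = 0 \<longleftrightarrow> x = y"
proof
  assume "l1_dist x y = 0"
  then have "\<forall>i. \<bar>x $ i - y $ i\<bar> = 0"
    unfolding l1_dist_def by (subst (asm) sum_nonneg_eq_0_iff) auto
  then show "x = y" by (simp add: vec_eq_iff)
qed simp

lemma dist_le_l1_dist: "dist x y \<le> l1_dist x y"
  unfolding l1_dist_def dist_norm using norm_le_l1_cart[of "x - y"] by simp

lemma continuous_on_l1_dist [continuous_intros]:
  "continuous_on S f \<Longrightarrow> continuous_on S g \<Longrightarrow> continuous_on S (\<lambda>x. l1_dist (f x) (g x))"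
  unfolding l1_dist_def by (intro continuous_intros)

definition l1_between :: "real ^ 'n \<Rightarrow> real ^ 'n \<Rightarrow> real ^ 'n \<Rightarrow> bool" where
  "l1_between a x b \<longleftrightarrow> l1_dist a x + l1_dist x b = l1_dist a b"

lemma l1_between_commute: "l1_between a x b \<longleftrightarrow> l1_between b x a"
  unfolding l1_between_def by (simp add: l1_dist_commute add.commute)

lemma l1_between_iff_components:
  "l1_between a x b \<longleftrightarrow> (\<forall>i. \<bar>a $ i - x $ i\<bar> + \<bar>x $ i - b $ i\<bar> = \<bar>a $ i - b $ i\<bar>)"
proof -
  have "l1_dist a x + l1_dist x b - l1_dist a b =
      (\<Sum>i\<in>UNIV. \<bar>a $ i - x $ i\<bar> + \<bar>x $ i - b $ i\<bar> - \<bar>a $ i - b $ i\<bar>)"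
    unfolding l1_dist_def by (simp add: sum.distrib sum_subtractf)
  moreover have "(\<Sum>i\<in>UNIV. \<bar>a $ i - x $ i\<bar> + \<bar>x $ i - b $ i\<bar> - \<bar>a $ i - b $ i\<bar>) = 0 \<longleftrightarrow>
      (\<forall>i. \<bar>a $ i - x $ i\<bar> + \<bar>x $ i - b $ i\<bar> - \<bar>a $ i - b $ i\<bar> = 0)"
    by (subst sum_nonneg_eq_0_iff) auto
  ultimately show ?thesis unfolding l1_between_def by auto
qed

lemma l1_between_trans:
  assumes "l1_between a p b" "l1_between a q b" "l1_between p u q"
  shows "l1_between a u b"
proof -
  have "\<bar>a - u\<bar> + \<bar>u - b\<bar> = \<bar>a - b\<bar>"
    if "\<bar>a - p\<bar> + \<bar>p - b\<bar> = \<bar>a - b\<bar>" "\<bar>a - q\<bar> + \<bar>q - b\<bar> = \<bar>a - b\<bar>"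
      "\<bar>p - u\<bar> + \<bar>u - q\<bar> = \<bar>p - q\<bar>" for a b p q u :: real
    using that by (auto simp: abs_if split: if_splits)
  with assms show ?thesis unfolding l1_between_iff_components by blast
qed

definition l1_geodesic :: "(real \<Rightarrow> real ^ 'n) \<Rightarrow> real ^ 'n \<Rightarrow> real ^ 'n \<Rightarrow> bool" where
  "l1_geodesic \<gamma> a b \<longleftrightarrow> \<gamma> 0 = a \<and> \<gamma> (l1_dist a b) = b \<and>
     (\<forall>t\<in>{0..l1_dist a b}. \<forall>t'\<in>{0..l1_dist a b}. l1_dist (\<gamma> t) (\<gamma> t') = \<bar>t - t'\<bar>)"

lemma l1_convex_iff_geodesic:
  "l1_convex Z \<longleftrightarrow>
     (\<forall>a\<in>Z. \<forall>b\<in>Z. \<exists>\<gamma>. l1_geodesic \<gamma> a b \<and> \<gamma> ` {0..l1_dist a b} \<subseteq> Z)"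
  unfolding l1_convex_def l1_geodesic_def image_subset_iff by blast

lemma l1_geodesic_continuous:
  assumes "l1_geodesic \<gamma> a b"
  shows "continuous_on {0..l1_dist a b} \<gamma>"
  unfolding continuous_on_iff
proof (intro ballI allI impI)
  fix t e assume "t \<in> {0..l1_dist a b}" and "0 < (e::real)"
  then show "\<exists>d>0. \<forall>t'\<in>{0..l1_dist a b}. dist t' t < d \<longrightarrow> dist (\<gamma> t') (\<gamma> t) < e"
    using assms dist_le_l1_dist[of "\<gamma> _" "\<gamma> t"]
    unfolding l1_geodesic_def dist_real_def by (metis order_le_less_trans)
qed

lemma l1_geodesic_dist:
  assumes "l1_geodesic \<gamma> a b" and "t \<in> {0..l1_dist a b}"
  shows "l1_dist a (\<gamma> t) = t" and "l1_dist (\<gamma> t) b = l1_dist a b - t"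
proof -
  have "0 \<in> {0..l1_dist a b}" and "l1_dist a b \<in> {0..l1_dist a b}"
    using l1_dist_nonneg[of a b] by auto
  with assms show "l1_dist a (\<gamma> t) = t" and "l1_dist (\<gamma> t) b = l1_dist a b - t"
    unfolding l1_geodesic_def by (metis atLeastAtMost_iff abs_of_nonneg diff_ge_0_iff_ge
        diff_zero abs_minus_commute)+
qed

lemma l1_convex_point_at:
  assumes "l1_convex X" and "a \<in> X" and "b \<in> X" and "t \<in> {0..l1_dist a b}"
  shows "\<exists>p\<in>X. l1_dist a p = t \<and> l1_dist p b = l1_dist a b - t"
proof -
  obtain \<gamma> where "l1_geodesic \<gamma> a b" and "\<gamma> ` {0..l1_dist a b} \<subseteq> X"
    using assms(1-3) unfolding l1_convex_iff_geodesic by blast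
  with assms(4) show ?thesis using l1_geodesic_dist by blast
qed

lemma l1_convex_Un_meets_Int:
  assumes "closed X" and "closed Y" and "l1_convex (X \<union> Y)" and "p \<in> X" and "q \<in> Y"
  shows "\<exists>u\<in>X \<inter> Y. l1_between p u q"
proof -
  define I where "I = {0..l1_dist p q}"
  obtain \<sigma> where \<sigma>: "l1_geodesic \<sigma> p q" and \<sigma>_XY: "\<sigma> ` I \<subseteq> X \<union> Y"
    using assms(3-5) unfolding l1_convex_iff_geodesic I_def by blast
  have ends: "p \<in> \<sigma> ` I" "q \<in> \<sigma> ` I"
    using \<sigma> l1_dist_nonneg[of p q] unfolding l1_geodesic_def I_def by (force, force)
  have "connected (\<sigma> ` I)"
    using l1_geodesic_continuous[OF \<sigma>] unfolding I_def by (intro connected_continuous_image) auto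
  then have "X \<inter> Y \<inter> \<sigma> ` I \<noteq> {}"
    using \<sigma>_XY ends assms(1,2,4,5) unfolding connected_closed by blast
  then obtain t where t: "t \<in> I" and "\<sigma> t \<in> X \<inter> Y" by blast
  moreover have "l1_between p (\<sigma> t) q"
    using l1_geodesic_dist[OF \<sigma>] t unfolding l1_between_def I_def by simp
  ultimately show ?thesis by blast
qed

text \<open>x and y lie, in this order, on a common geodesic from v to w.\<close>

definition l1_precedes :: "real ^ 'n \<Rightarrow> real ^ 'n \<Rightarrow> real ^ 'n \<Rightarrow> real ^ 'n \<Rightarrow> bool" where
  "l1_precedes v w x y \<longleftrightarrow> l1_dist v x + l1_dist x y + l1_dist y w = l1_dist v w"

lemma l1_precedes_dist:
  assumes "l1_precedes v w x y"
  shows "l1_dist x y = l1_dist v y - l1_dist v x"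
  using assms l1_dist_triangle[of v w y] l1_dist_triangle[of v y x]
  unfolding l1_precedes_def by linarith

lemma l1_precedes_reflI:
  assumes "l1_precedes v w x y"
  shows "l1_precedes v w y y"
  using assms l1_dist_triangle[of v w y] l1_dist_triangle[of v y x] l1_dist_self[of y]
  unfolding l1_precedes_def by linarith

lemma l1_precedes_trans:
  assumes "l1_precedes v w x y" and "l1_precedes v w y z"
  shows "l1_precedes v w x z"
  using assms l1_dist_triangle[of v w z] l1_dist_triangle[of v z x] l1_dist_triangle[of v w y]
    l1_dist_triangle[of x z y] l1_dist_triangle[of y w z]
  unfolding l1_precedes_def by linarith

lemma l1_precedes_between:
  assumes "l1_precedes v w l u" and "l1_between l x u"
  shows "l1_precedes v w l x" and "l1_precedes v w x u"
  using assms l1_dist_triangle[of v x l] l1_dist_triangle[of v w x] l1_dist_triangle[of x w u]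
    l1_dist_triangle[of v u x]
  unfolding l1_precedes_def l1_between_def by linarith+

lemma closed_l1_precedes:
  "closed {x. l1_precedes v w x a}" "closed {x. l1_precedes v w a x}"
  unfolding l1_precedes_def by (intro closed_Collect_eq continuous_intros)+

definition l1_chain :: "(real ^ 'n) set \<Rightarrow> real ^ 'n \<Rightarrow> real ^ 'n \<Rightarrow> (real ^ 'n) set \<Rightarrow> bool"
  where "l1_chain Z v w M \<longleftrightarrow> v \<in> M \<and> w \<in> M \<and> M \<subseteq> Z \<and>
     (\<forall>x\<in>M. \<forall>y\<in>M. l1_precedes v w x y \<or> l1_precedes v w y x)"

lemma l1_chain_dist:
  assumes "l1_chain Z v w M" and "x \<in> M" and "y \<in> M"
  shows "l1_dist x y = \<bar>l1_dist v y - l1_dist v x\<bar>"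
  using assms l1_precedes_dist[of v w x y] l1_precedes_dist[of v w y x]
    l1_dist_nonneg[of x y] l1_dist_commute[of x y]
  unfolding l1_chain_def by fastforce

lemma l1_chain_precedes_iff:
  assumes "l1_chain Z v w M" and "x \<in> M" and "y \<in> M"
  shows "l1_precedes v w x y \<longleftrightarrow> l1_dist v x \<le> l1_dist v y"
proof
  show "l1_dist v x \<le> l1_dist v y" if "l1_precedes v w x y"
    using l1_precedes_dist[OF that] l1_dist_nonneg[of x y] by linarith
next
  assume le: "l1_dist v x \<le> l1_dist v y"
  show "l1_precedes v w x y"
  proof (cases "l1_precedes v w y x")
    case True
    then have "x = y"
      using le l1_precedes_dist[OF True] l1_dist_nonneg[of y x] l1_dist_eq_0_iff[of y x] by simp
    with True show ?thesis by (metis l1_precedes_reflI)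
  qed (use assms in \<open>auto simp: l1_chain_def\<close>)
qed

lemma l1_chain_le_dist:
  assumes "l1_chain Z v w M" and "x \<in> M"
  shows "l1_dist v x \<le> l1_dist v w"
  using assms l1_dist_nonneg[of x w] unfolding l1_chain_def l1_precedes_def by fastforce

lemma l1_chain_closure:
  assumes "closed Z" and "l1_chain Z v w M"
  shows "l1_chain Z v w (closure M)"
proof -
  let ?comparable = "\<lambda>a. {x. l1_precedes v w x a} \<union> {x. l1_precedes v w a x}"
  have "closure M \<subseteq> ?comparable a" if "a \<in> M" for a
    using assms(2) that closed_l1_precedes unfolding l1_chain_def
    by (intro closure_minimal closed_Un) auto
  then have "closure M \<subseteq> ?comparable a" if "a \<in> closure M" for a
    using that closed_l1_precedes by (intro closure_minimal closed_Un) auto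
  moreover have "closure M \<subseteq> Z"
    using assms unfolding l1_chain_def by (intro closure_minimal) auto
  ultimately show ?thesis
    using assms(2) closure_subset[of M] unfolding l1_chain_def by blast
qed

lemma compact_l1_chain:
  assumes "l1_chain Z v w M" and "closed M"
  shows "compact M"
proof -
  have "M \<subseteq> cball v (l1_dist v w)"
    using l1_chain_le_dist[OF assms(1)] dist_le_l1_dist[of v] by (force intro: order_trans)
  with assms(2) show ?thesis by (metis compact_cball compact_Int_closed inf.absorb_iff2)
qed

lemma ex_maximal_l1_chain:
  assumes "v \<in> Z" and "w \<in> Z"
  shows "\<exists>M. l1_chain Z v w M \<and> (\<forall>N. l1_chain Z v w N \<longrightarrow> M \<subseteq> N \<longrightarrow> N = M)"
proof -
  have vw: "l1_chain Z v w {v, w}"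
    using assms l1_dist_nonneg[of v w] unfolding l1_chain_def l1_precedes_def
    by (auto simp: l1_dist_commute)
  have "\<exists>U\<in>Collect (l1_chain Z v w). \<forall>N\<in>C. N \<subseteq> U"
    if C: "subset.chain (Collect (l1_chain Z v w)) C" for C
  proof (cases "C = {}")
    case True
    with vw show ?thesis by blast
  next
    case False
    have chains: "\<And>N. N \<in> C \<Longrightarrow> l1_chain Z v w N"
      using C unfolding subset.chain_def by auto
    have "l1_chain Z v w (\<Union>C)"
      unfolding l1_chain_def
    proof (intro conjI ballI)
      fix x y assume "x \<in> \<Union>C" "y \<in> \<Union>C"
      then obtain N N' where "N \<in> C" "N' \<in> C" "x \<in> N \<union> N'" "y \<in> N \<union> N'" by blast
      moreover from C this(1,2) have "N \<subseteq> N' \<or> N' \<subseteq> N"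
        unfolding subset.chain_def by auto
      ultimately show "l1_precedes v w x y \<or> l1_precedes v w y x"
        using chains unfolding l1_chain_def by (metis sup.absorb2 sup.absorb1)
    qed (use chains False in \<open>auto simp: l1_chain_def\<close>)
    then show ?thesis by blast
  qed
  then show ?thesis using subset_Zorn[of "Collect (l1_chain Z v w)"] by auto
qed

lemma l1_chain_insert:
  assumes M: "l1_chain Z v w M" and "x \<in> Z" and "l \<in> M" and "u \<in> M"
    and "l1_precedes v w l x" and "l1_precedes v w x u"
    and split: "\<forall>m\<in>M. l1_precedes v w m l \<or> l1_precedes v w u m"
  shows "l1_chain Z v w (insert x M)"
proof -
  have "l1_precedes v w m x \<or> l1_precedes v w x m" if "m \<in> M" for m
    using split that assms(5,6) l1_precedes_trans by blast
  moreover have "l1_precedes v w x x"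
    using assms(5) by (rule l1_precedes_reflI)
  ultimately show ?thesis
    using M \<open>x \<in> Z\<close> unfolding l1_chain_def by blast
qed

lemma compact_value_gap:
  fixes g :: "'a::topological_space \<Rightarrow> real"
  assumes "compact M" and "continuous_on UNIV g"
    and "v \<in> M" and "w \<in> M" and "g v \<le> c" and "c \<le> g w" and "c \<notin> g ` M"
  obtains l u where "l \<in> M" "u \<in> M" "g l < c" "c < g u" "\<forall>m\<in>M. g m \<le> g l \<or> g u \<le> g m"
proof -
  have g: "continuous_on S g" for S
    using assms(2) by (rule continuous_on_subset) simp
  have "compact (M \<inter> {x. g x \<le> c})" "compact (M \<inter> {x. c \<le> g x})"
    using \<open>compact M\<close> closed_Collect_le[OF assms(2) continuous_on_const]
      closed_Collect_le[OF continuous_on_const assms(2)] by auto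
  moreover have "v \<in> M \<inter> {x. g x \<le> c}" "w \<in> M \<inter> {x. c \<le> g x}"
    using assms(3-6) by auto
  ultimately obtain l u where
      l: "l \<in> M \<inter> {x. g x \<le> c}" "\<forall>m\<in>M \<inter> {x. g x \<le> c}. g m \<le> g l" and
      u: "u \<in> M \<inter> {x. c \<le> g x}" "\<forall>m\<in>M \<inter> {x. c \<le> g x}. g u \<le> g m"
    using continuous_attains_sup[OF _ _ g] continuous_attains_inf[OF _ _ g] by (metis empty_iff)
  moreover have "g l \<noteq> c" "g u \<noteq> c"
    using l(1) u(1) \<open>c \<notin> g ` M\<close> by auto
  ultimately show thesis
    using that[of l u] by fastforce
qed

lemma maximal_l1_chain_attains_dist:
  assumes "closed Z"
    and between: "\<And>a b. a \<in> Z \<Longrightarrow> b \<in> Z \<Longrightarrow> a \<noteq> b \<Longrightarrow>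
                     \<exists>x\<in>Z. x \<noteq> a \<and> x \<noteq> b \<and> l1_between a x b"
    and M: "l1_chain Z v w M" and max: "\<And>N. l1_chain Z v w N \<Longrightarrow> M \<subseteq> N \<Longrightarrow> N = M"
    and c: "c \<in> {0..l1_dist v w}"
  shows "\<exists>m\<in>M. l1_dist v m = c"
proof (rule ccontr)
  assume "\<not> ?thesis"
  then have gap: "c \<notin> l1_dist v ` M" by blast
  have "closure M = M"
    using max[OF l1_chain_closure[OF \<open>closed Z\<close> M] closure_subset] .
  then have "compact M"
    using compact_l1_chain[OF M] closed_closure by metis
  moreover have "continuous_on UNIV (l1_dist v)"
    by (intro continuous_intros)
  moreover have "v \<in> M" "w \<in> M"
    using M unfolding l1_chain_def by auto
  ultimately obtain l u where l: "l \<in> M" and u: "u \<in> M"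
    and "l1_dist v l < c" "c < l1_dist v u"
    and split: "\<forall>m\<in>M. l1_dist v m \<le> l1_dist v l \<or> l1_dist v u \<le> l1_dist v m"
    using compact_value_gap[of M "l1_dist v" v w c] gap c by auto
  then have "l1_precedes v w l u" and "l \<noteq> u"
    using l1_chain_precedes_iff[OF M l u] by auto
  moreover obtain x where "x \<in> Z" "x \<noteq> l" "x \<noteq> u" "l1_between l x u"
    using between[of l u] M l u \<open>l \<noteq> u\<close> unfolding l1_chain_def by blast
  ultimately have lx: "l1_precedes v w l x" and xu: "l1_precedes v w x u"
    using l1_precedes_between by blast+
  have "l1_dist l x > 0" "l1_dist x u > 0"
    using \<open>x \<noteq> l\<close> \<open>x \<noteq> u\<close> l1_dist_nonneg l1_dist_eq_0_iff by (metis less_eq_real_def)+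
  then have "l1_dist v l < l1_dist v x" "l1_dist v x < l1_dist v u"
    using l1_precedes_dist[OF lx] l1_precedes_dist[OF xu] by simp_all
  then have "x \<notin> M"
    using split by (metis not_le order.strict_iff_not)
  have "\<forall>m\<in>M. l1_precedes v w m l \<or> l1_precedes v w u m"
    using split l1_chain_precedes_iff[OF M _ l] l1_chain_precedes_iff[OF M u] by blast
  then have "l1_chain Z v w (insert x M)"
    using l1_chain_insert[OF M \<open>x \<in> Z\<close> l u lx xu] by blast
  with max \<open>x \<notin> M\<close> show False by blast
qed

theorem closed_between_imp_l1_convex:
  assumes "closed Z"
    and between: "\<And>a b. a \<in> Z \<Longrightarrow> b \<in> Z \<Longrightarrow> a \<noteq> b \<Longrightarrow>
                     \<exists>x\<in>Z. x \<noteq> a \<and> x \<noteq> b \<and> l1_between a x b"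
  shows "l1_convex Z"
  unfolding l1_convex_iff_geodesic
proof (intro ballI)
  fix v w assume "v \<in> Z" "w \<in> Z"
  then obtain M where M: "l1_chain Z v w M"
    and max: "\<And>N. l1_chain Z v w N \<Longrightarrow> M \<subseteq> N \<Longrightarrow> N = M"
    using ex_maximal_l1_chain by blast
  define \<gamma> where "\<gamma> t = (SOME m. m \<in> M \<and> l1_dist v m = t)" for t
  have \<gamma>: "\<gamma> t \<in> M" "l1_dist v (\<gamma> t) = t" if "t \<in> {0..l1_dist v w}" for t
  proof -
    have "\<exists>m. m \<in> M \<and> l1_dist v m = t"
      using maximal_l1_chain_attains_dist[OF \<open>closed Z\<close> between M max that] by blast
    then show "\<gamma> t \<in> M" "l1_dist v (\<gamma> t) = t"
      unfolding \<gamma>_def by (metis (mono_tags, lifting) someI_ex)+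
  qed
  have ends: "v \<in> M" "w \<in> M" and "M \<subseteq> Z"
    using M unfolding l1_chain_def by auto
  have "l1_geodesic \<gamma> v w"
    unfolding l1_geodesic_def
  proof (intro conjI ballI)
    have "0 \<in> {0..l1_dist v w}" "l1_dist v w \<in> {0..l1_dist v w}"
      using l1_dist_nonneg[of v w] by auto
    then have "l1_dist v (\<gamma> 0) = 0" "l1_dist (\<gamma> (l1_dist v w)) w = 0"
      using \<gamma> l1_chain_dist[OF M _ ends(2)] by auto
    then show "\<gamma> 0 = v" "\<gamma> (l1_dist v w) = w"
      by (simp_all add: l1_dist_eq_0_iff)
    show "l1_dist (\<gamma> t) (\<gamma> t') = \<bar>t - t'\<bar>" if "t \<in> {0..l1_dist v w}" "t' \<in> {0..l1_dist v w}" for t t'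
      using l1_chain_dist[OF M] \<gamma>[OF that(1)] \<gamma>[OF that(2)] by (simp add: abs_minus_commute)
  qed
  moreover have "\<gamma> ` {0..l1_dist v w} \<subseteq> Z"
    using \<gamma> \<open>M \<subseteq> Z\<close> by blast
  ultimately show "\<exists>\<gamma>. l1_geodesic \<gamma> v w \<and> \<gamma> ` {0..l1_dist v w} \<subseteq> Z" by blast
qed

lemma l1_between_endpoint_component:
  assumes "l1_between a p b" and "l1_between a q b" and "l1_between p a q" and "p \<noteq> a"
  shows "\<exists>i. a $ i \<noteq> b $ i \<and> q $ i = a $ i"
proof -
  obtain i where "p $ i \<noteq> a $ i"
    using \<open>p \<noteq> a\<close> by (auto simp: vec_eq_iff)
  moreover have "a \<noteq> b \<and> q = a"
    if "\<bar>a - p\<bar> + \<bar>p - b\<bar> = \<bar>a - b\<bar>" "\<bar>a - q\<bar> + \<bar>q - b\<bar> = \<bar>a - b\<bar>"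
      "\<bar>p - a\<bar> + \<bar>a - q\<bar> = \<bar>p - q\<bar>" "p \<noteq> a" for a b p q :: real
    using that by (auto simp: abs_if split: if_splits)
  ultimately show ?thesis
    using assms(1-3) unfolding l1_between_iff_components by blast
qed

lemma ex_le_coordinate_gaps:
  assumes "a \<noteq> b"
  obtains \<epsilon> where "0 < \<epsilon>" "\<epsilon> \<le> l1_dist a b" "\<And>i. a $ i \<noteq> b $ i \<Longrightarrow> \<epsilon> \<le> \<bar>a $ i - b $ i\<bar>"
proof -
  define gaps where "gaps = (\<lambda>i. \<bar>a $ i - b $ i\<bar>) ` {i. a $ i \<noteq> b $ i}"
  obtain i0 where i0: "a $ i0 \<noteq> b $ i0"
    using assms by (auto simp: vec_eq_iff)
  have "finite gaps" and "gaps \<noteq> {}" and "\<forall>g\<in>gaps. 0 < g"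
    using i0 unfolding gaps_def by auto
  have le: "Min gaps \<le> \<bar>a $ i - b $ i\<bar>" if "a $ i \<noteq> b $ i" for i
    using \<open>finite gaps\<close> by (rule Min_le) (simp add: gaps_def that)
  show thesis
  proof (rule that[OF _ _ le])
    show "0 < Min gaps"
      using \<open>finite gaps\<close> \<open>gaps \<noteq> {}\<close> \<open>\<forall>g\<in>gaps. 0 < g\<close> by simp
    show "Min gaps \<le> l1_dist a b"
      using le[OF i0] component_le_l1_dist[of a i0 b] by linarith
  qed
qed

lemma l1_convex_Int_between:
  assumes "closed X" and "closed Y" and "l1_convex X" and "l1_convex Y" and "l1_convex (X \<union> Y)"
    and "a \<in> X \<inter> Y" and "b \<in> X \<inter> Y" and "a \<noteq> b"
  shows "\<exists>x\<in>X \<inter> Y. x \<noteq> a \<and> x \<noteq> b \<and> l1_between a x b"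
proof (rule ccontr)
  assume "\<not> ?thesis"
  then have only_ends: "u = a \<or> u = b" if "u \<in> X \<inter> Y" "l1_between a u b" for u
    using that by blast
  define D where "D = l1_dist a b"
  obtain \<epsilon> where "0 < \<epsilon>" "\<epsilon> \<le> D" and \<epsilon>_le: "\<And>i. a $ i \<noteq> b $ i \<Longrightarrow> \<epsilon> \<le> \<bar>a $ i - b $ i\<bar>"
    using ex_le_coordinate_gaps[OF \<open>a \<noteq> b\<close>] unfolding D_def by blast
  then have t: "\<epsilon>/2 \<in> {0..l1_dist a b}" "D - \<epsilon>/2 \<in> {0..l1_dist a b}"
    unfolding D_def by auto
  obtain p where "p \<in> X" and ap: "l1_dist a p = \<epsilon>/2" and "l1_dist p b = D - \<epsilon>/2"
    using l1_convex_point_at[OF \<open>l1_convex X\<close> _ _ t(1)] assms(6,7) unfolding D_def by auto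
  then have p: "l1_between a p b"
    unfolding l1_between_def D_def by simp
  obtain q where "q \<in> Y" and "l1_dist a q = D - \<epsilon>/2" and qb: "l1_dist q b = \<epsilon>/2"
    using l1_convex_point_at[OF \<open>l1_convex Y\<close> _ _ t(2)] assms(6,7) unfolding D_def by auto
  then have q: "l1_between a q b"
    unfolding l1_between_def D_def by simp
  obtain u where "u \<in> X \<inter> Y" and "l1_between p u q"
    using l1_convex_Un_meets_Int assms(1,2,5) \<open>p \<in> X\<close> \<open>q \<in> Y\<close> by blast
  then have "u = a \<or> u = b"
    using only_ends l1_between_trans[OF p q] by blast
  then show False
  proof
    assume "u = a"
    have "p \<noteq> a"
      using ap \<open>0 < \<epsilon>\<close> by auto
    then obtain i where "a $ i \<noteq> b $ i" "q $ i = a $ i"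
      using l1_between_endpoint_component[OF p q] \<open>l1_between p u q\<close> \<open>u = a\<close> by blast
    then show False
      using \<epsilon>_le[of i] component_le_l1_dist[of q i b] qb \<open>0 < \<epsilon>\<close> by auto
  next
    assume "u = b"
    have "q \<noteq> b"
      using qb \<open>0 < \<epsilon>\<close> by auto
    moreover have "l1_between b q a" "l1_between b p a" "l1_between q b p"
      using p q \<open>l1_between p u q\<close> \<open>u = b\<close> by (simp_all add: l1_between_commute)
    ultimately obtain i where "b $ i \<noteq> a $ i" "p $ i = b $ i"
      using l1_between_endpoint_component by blast
    then show False
      using \<epsilon>_le[of i] component_le_l1_dist[of a i p] ap \<open>0 < \<epsilon>\<close> by auto
  qed
qed

theorem lemma1p13:
  fixes X Y :: "(real ^ 'n) set"
  assumes "closed X" and "closed Y"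
    and "l1_convex X" and "l1_convex Y" and "l1_convex (X \<union> Y)"
  shows "l1_convex (X \<inter> Y)"
proof (rule closed_between_imp_l1_convex)
  show "closed (X \<inter> Y)"
    using assms(1,2) by (rule closed_Int)
  show "\<exists>x\<in>X \<inter> Y. x \<noteq> a \<and> x \<noteq> b \<and> l1_between a x b"
    if "a \<in> X \<inter> Y" and "b \<in> X \<inter> Y" and "a \<noteq> b" for a b
    using l1_convex_Int_between[OF assms that] .
qed

end
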